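(* Let $H\leq F_2$ and fix $y\in F_2$. For any $xH\in F_2/H$ and all $i\geq 1$, we have $|E_i(xH)|=|\Omega_{i,xH}|$.
   Context: $F_2$ is the free group on $a,b$ and $\Xi=\{a,b,a^{-1},b^{-1}\}$. The directed coset graph of $F_2/H$ has vertex set $F_2/H$ and, for each vertex $rH$ and each $h\in\Xi$, one directed edge from $rH$ to $hrH$ (so loops and parallel edges may occur); two vertices are adjacent if there is an edge between them. Sets $\Omega_{k,xH}\subseteq\Xi$ for $k\geq -1$, $xH\in F_2/H$ are defined recursively: $\Omega_{-1,xH}=\varnothing$ for all $xH$; $\Omega_{0,yH}=\Xi$ and $\Omega_{0,xH}=\varnothing$ for $xH\neq yH$; and for $k\geq 0$, $\Omega_{k+1,zH}=\{h\in\Xi:\Omega_{k-1,zH}=\varnothing\text{ and }\Omega_{k,h^{-1}zH}\neq\varnothing\}$. Sets $E_i$ of directed edges are defined recursively: $E_1$ is the set of all directed edges whose source is $yH$; $E_{i+1}$ is the set of all directed edges $tH\to sH$ such that no directed edge from $sH$ to $tH$ belongs to $E_i$ and there exists a vertex $rH$ with a directed edge $rH\to tH$ in $E_i$. $E_i(xH)$ denotes the set of edges in $E_i$ whose target is $xH$. *)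

theory Defs
  imports "HOL-Algebra.Coset"
begin

datatype gen = GA | GB

text \<open>A letter (g, False) is the generator g, (g, True) is its inverse.
  The alphabet Xi = {a, b, a^-1, b^-1} is the whole type of letters.\<close>
type_synonym letter = "gen \<times> bool"

definition Xi :: "letter set" where "Xi = UNIV"

definition inv_letter :: "letter \<Rightarrow> letter" where
  "inv_letter l = (fst l, \<not> snd l)"

fun cancel_cons :: "letter \<Rightarrow> letter list \<Rightarrow> letter list" where
  "cancel_cons l [] = [l]"
| "cancel_cons l (m # ms) = (if m = inv_letter l then ms else l # m # ms)"

definition reduce :: "letter list \<Rightarrow> letter list" where
  "reduce w = foldr cancel_cons w []"

fun reduced :: "letter list \<Rightarrow> bool" where
  "reduced [] = True"
| "reduced [l] = True"
| "reduced (l # m # ms) = (m \<noteq> inv_letter l \<and> reduced (m # ms))"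

definition F2 :: "letter list monoid" where
  "F2 = \<lparr> carrier = {w. reduced w}, mult = (\<lambda>u v. reduce (u @ v)), one = [] \<rparr>"

definition elt :: "letter \<Rightarrow> letter list" where "elt h = [h]"

definition cosets :: "letter list set \<Rightarrow> letter list set set" where
  "cosets H = (\<lambda>r. r <#\<^bsub>F2\<^esub> H) ` carrier F2"

type_synonym edge = "letter list set \<times> letter"

definition src :: "edge \<Rightarrow> letter list set" where "src e = fst e"

definition tgt :: "edge \<Rightarrow> letter list set" where
  "tgt e = elt (snd e) <#\<^bsub>F2\<^esub> fst e"

definition edges :: "letter list set \<Rightarrow> edge set" where
  "edges H = cosets H \<times> Xi"

text \<open>Om n C stands for Omega_{n-1,C}; index shifted by one so that it lives on nat.\<close>
fun Om :: "letter list set \<Rightarrow> letter list \<Rightarrow> nat \<Rightarrow> letter list set \<Rightarrow> letter set" where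
  "Om H y 0 C = {}"
| "Om H y (Suc 0) C = (if C = y <#\<^bsub>F2\<^esub> H then Xi else {})"
| "Om H y (Suc (Suc k)) C =
     {h \<in> Xi. Om H y k C = {} \<and> Om H y (Suc k) (elt (inv_letter h) <#\<^bsub>F2\<^esub> C) \<noteq> {}}"

definition Omega :: "letter list set \<Rightarrow> letter list \<Rightarrow> int \<Rightarrow> letter list set \<Rightarrow> letter set" where
  "Omega H y k C = Om H y (nat (k + 1)) C"

text \<open>Eseq n = E_{n+1}.\<close>
fun Eseq :: "letter list set \<Rightarrow> letter list \<Rightarrow> nat \<Rightarrow> edge set" where
  "Eseq H y 0 = {e \<in> edges H. src e = y <#\<^bsub>F2\<^esub> H}"
| "Eseq H y (Suc n) =
     {e \<in> edges H.
        \<not> (\<exists>e' \<in> Eseq H y n. src e' = tgt e \<and> tgt e' = src e) \<and>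
        (\<exists>e'' \<in> Eseq H y n. tgt e'' = src e)}"

definition E :: "letter list set \<Rightarrow> letter list \<Rightarrow> nat \<Rightarrow> edge set" where
  "E H y i = Eseq H y (i - 1)"

definition E_at :: "letter list set \<Rightarrow> letter list \<Rightarrow> nat \<Rightarrow> letter list set \<Rightarrow> edge set" where
  "E_at H y i C = {e \<in> E H y i. tgt e = C}"

end

theory Submission
  imports Defs
begin

text \<open>An edge \<open>D \<rightarrow> hD\<close> lies in \<open>E\<^sub>n\<^sub>+\<^sub>1\<close> exactly when \<open>\<Omega>\<^sub>n\<^sub>,\<^sub>D \<noteq> \<emptyset>\<close> and
  \<open>\<Omega>\<^sub>n\<^sub>-\<^sub>1\<^sub>,\<^sub>h\<^sub>D = \<emptyset>\<close>. This follows by induction on \<open>n\<close> because every letter acts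
  bijectively on the cosets: the reverse of the edge \<open>D \<rightarrow> hD\<close> is the edge \<open>hD \<rightarrow> D\<close>
  with label \<open>h\<^sup>-\<^sup>1\<close>, and an edge into \<open>D\<close> with label \<open>g\<close> must start at \<open>g\<^sup>-\<^sup>1D\<close>.
  Hence \<open>h \<mapsto> (h\<^sup>-\<^sup>1C, h)\<close> is a bijection from \<open>\<Omega>\<^sub>n\<^sub>+\<^sub>1\<^sub>,\<^sub>C\<close> onto \<open>E\<^sub>n\<^sub>+\<^sub>1(C)\<close>.\<close>

lemma inv_inv_letter [simp]: "inv_letter (inv_letter l) = l"
  by (simp add: inv_letter_def)

lemma reduced_Cons_tl: "reduced (m # ms) \<Longrightarrow> reduced ms"
  by (cases ms) auto

lemma reduced_cancel_cons: "reduced w \<Longrightarrow> reduced (cancel_cons l w)"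
  by (cases w) (auto intro: reduced_Cons_tl)

lemma reduced_foldr_cancel_cons: "reduced z \<Longrightarrow> reduced (foldr cancel_cons a z)"
  by (induction a) (auto intro: reduced_cancel_cons)

lemma reduced_reduce: "reduced (reduce w)"
  unfolding reduce_def by (rule reduced_foldr_cancel_cons) simp

lemma reduce_Cons: "reduce (l # w) = cancel_cons l (reduce w)"
  by (simp add: reduce_def)

lemma reduce_append: "reduce (u @ v) = foldr cancel_cons u (reduce v)"
  by (simp add: reduce_def)

lemma cancel_cons_inv_letter:
  assumes "reduced w"
  shows "cancel_cons (inv_letter l) (cancel_cons l w) = w"
proof (cases w)
  case (Cons m ms)
  then show ?thesis
    using assms by (cases "m = inv_letter l"; cases ms) auto
qed simp

lemma cancel_cons_inv_letter':
  "reduced w \<Longrightarrow> cancel_cons l (cancel_cons (inv_letter l) w) = w"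
  using cancel_cons_inv_letter[of w "inv_letter l"] by simp

lemma reduce_reduced: "reduced w \<Longrightarrow> reduce w = w"
proof (induction w)
  case (Cons l w)
  then show ?case
    by (cases w) (auto simp: reduce_Cons dest: reduced_Cons_tl)
qed (simp add: reduce_def)

lemma foldr_cancel_cons_cancel_cons:
  assumes "reduced v" "reduced z"
  shows "foldr cancel_cons (cancel_cons l v) z = cancel_cons l (foldr cancel_cons v z)"
proof (cases v)
  case (Cons m vs)
  have "reduced (foldr cancel_cons vs z)"
    using assms(2) by (rule reduced_foldr_cancel_cons)
  then show ?thesis
    using Cons by (auto simp: cancel_cons_inv_letter')
qed simp

lemma foldr_cancel_cons_reduce:
  "reduced z \<Longrightarrow> foldr cancel_cons (reduce u) z = foldr cancel_cons u z"
  by (induction u)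
    (simp_all add: reduce_def foldr_cancel_cons_cancel_cons[OF reduced_reduce[unfolded reduce_def]])

lemma reduce_reduce_append: "reduce (reduce u @ v) = reduce (u @ v)"
  by (simp add: reduce_append foldr_cancel_cons_reduce reduced_reduce)

lemma reduce_reduce [simp]: "reduce (reduce w) = reduce w"
  by (simp add: reduce_reduced reduced_reduce)

lemma l_coset_F2_eq: "r <#\<^bsub>F2\<^esub> C = (\<lambda>w. reduce (r @ w)) ` C"
  unfolding l_coset_def F2_def by auto

lemma reduced_if_mem_cosets: "C \<in> cosets H \<Longrightarrow> w \<in> C \<Longrightarrow> reduced w"
  unfolding cosets_def l_coset_F2_eq by (auto simp: reduced_reduce)

definition translate :: "letter \<Rightarrow> letter list set \<Rightarrow> letter list set" where
  "translate h C = elt h <#\<^bsub>F2\<^esub> C"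

lemma src_Pair: "src (D, h) = D"
  by (simp add: src_def)

lemma tgt_eq_translate: "tgt (D, h) = translate h D"
  by (simp add: tgt_def translate_def)

lemma translate_eq_image: "translate h C = (\<lambda>w. cancel_cons h (reduce w)) ` C"
  by (simp add: translate_def elt_def l_coset_F2_eq reduce_Cons)

lemma translate_inv_letter_translate:
  assumes "C \<in> cosets H"
  shows "translate (inv_letter h) (translate h C) = C"
proof -
  have "reduce (cancel_cons h (reduce w)) = cancel_cons h w" if "w \<in> C" for w
    using reduced_if_mem_cosets[OF assms that]
    by (simp add: reduce_reduced reduced_cancel_cons)
  then show ?thesis
    using reduced_if_mem_cosets[OF assms]
    by (simp add: translate_eq_image image_image cancel_cons_inv_letter cong: image_cong)
qed

lemma translate_translate_inv_letter:
  "C \<in> cosets H \<Longrightarrow> translate h (translate (inv_letter h) C) = C"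
  using translate_inv_letter_translate[of C H "inv_letter h"] by simp

lemma translate_mem_cosets:
  assumes "C \<in> cosets H"
  shows "translate h C \<in> cosets H"
proof -
  obtain r where r: "r \<in> carrier F2" "C = r <#\<^bsub>F2\<^esub> H"
    using assms unfolding cosets_def by auto
  have "reduce (h # reduce (r @ w)) = reduce (reduce (h # r) @ w)" for w
    using reduce_reduce_append[of "h # r" w] by (simp add: reduce_Cons)
  then have "translate h C = reduce (h # r) <#\<^bsub>F2\<^esub> H"
    unfolding translate_def elt_def r l_coset_F2_eq image_image by simp
  moreover have "reduce (h # r) \<in> carrier F2"
    by (simp add: F2_def reduced_reduce)
  ultimately show ?thesis
    unfolding cosets_def by blast
qed

lemma translate_eq_iff:
  assumes "C \<in> cosets H" "D \<in> cosets H"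
  shows "translate g D = C \<longleftrightarrow> D = translate (inv_letter g) C"
  using translate_inv_letter_translate[OF assms(2), of g]
    translate_translate_inv_letter[OF assms(1), of g]
  by auto

lemma Om_Suc_Suc:
  "Om H y (Suc (Suc k)) C =
     {h. Om H y k C = {} \<and> Om H y (Suc k) (translate (inv_letter h) C) \<noteq> {}}"
  by (simp add: translate_def Xi_def)

lemma mem_cosets_if_mem_Eseq: "(D, h) \<in> Eseq H y n \<Longrightarrow> D \<in> cosets H"
  by (cases n) (simp_all add: edges_def)

lemma Eseq_into_eq:
  assumes "C \<in> cosets H"
  shows "{e \<in> Eseq H y n. tgt e = C} =
    (\<lambda>g. (translate (inv_letter g) C, g)) ` {g. (translate (inv_letter g) C, g) \<in> Eseq H y n}"
    (is "_ = ?image")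
proof
  show "{e \<in> Eseq H y n. tgt e = C} \<subseteq> ?image"
  proof
    fix e
    assume "e \<in> {e \<in> Eseq H y n. tgt e = C}"
    moreover obtain D g where "e = (D, g)"
      by (cases e)
    ultimately have e: "(D, g) \<in> Eseq H y n" "tgt (D, g) = C"
      by auto
    then have "D \<in> cosets H"
      using mem_cosets_if_mem_Eseq by blast
    then have "D = translate (inv_letter g) C"
      using e(2) translate_eq_iff[OF assms] by (simp add: tgt_eq_translate)
    with e \<open>e = (D, g)\<close> show "e \<in> ?image"
      by auto
  qed
qed (auto simp: tgt_eq_translate translate_translate_inv_letter[OF assms])

lemma Eseq_edge_into_iff:
  assumes "C \<in> cosets H"
  shows "(\<exists>e \<in> Eseq H y n. src e = D \<and> tgt e = C) \<longleftrightarrow>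
    (\<exists>g. D = translate (inv_letter g) C \<and> (D, g) \<in> Eseq H y n)"
proof -
  have "(\<exists>e \<in> Eseq H y n. src e = D \<and> tgt e = C) \<longleftrightarrow>
      (\<exists>e \<in> {e \<in> Eseq H y n. tgt e = C}. src e = D)"
    by blast
  also have "\<dots> \<longleftrightarrow> (\<exists>g. D = translate (inv_letter g) C \<and> (D, g) \<in> Eseq H y n)"
    unfolding Eseq_into_eq[OF assms] by (auto simp: src_def)
  finally show ?thesis .
qed

lemma mem_Eseq_Suc_iff:
  "(D, h) \<in> Eseq H y (Suc n) \<longleftrightarrow>
     D \<in> cosets H \<and> \<not> (\<exists>e \<in> Eseq H y n. src e = translate h D \<and> tgt e = D) \<and>
     (\<exists>e \<in> Eseq H y n. tgt e = D)"
  by (simp add: edges_def Xi_def tgt_eq_translate src_Pair)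

lemma mem_Eseq_iff:
  "(D, h) \<in> Eseq H y n \<longleftrightarrow>
     D \<in> cosets H \<and> Om H y (Suc n) D \<noteq> {} \<and> Om H y n (translate h D) = {}"
proof (induction n arbitrary: D h)
  case 0
  show ?case
    by (simp add: edges_def src_def Xi_def)
next
  case (Suc n)
  show ?case
  proof (cases "D \<in> cosets H")
    case D: True
    have edge_into_iff: "(\<exists>e \<in> Eseq H y n. src e = A \<and> tgt e = D) \<longleftrightarrow>
        (\<exists>g. A = translate (inv_letter g) D) \<and> Om H y (Suc n) A \<noteq> {} \<and> Om H y n D = {}" for A
      unfolding Eseq_edge_into_iff[OF D] Suc.IH
      by (auto simp: translate_translate_inv_letter[OF D] translate_mem_cosets[OF D])
    have into: "(\<exists>e \<in> Eseq H y n. tgt e = D) \<longleftrightarrow>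
        Om H y n D = {} \<and> (\<exists>g. Om H y (Suc n) (translate (inv_letter g) D) \<noteq> {})"
    proof -
      have "(\<exists>e \<in> Eseq H y n. tgt e = D) \<longleftrightarrow> (\<exists>A. \<exists>e \<in> Eseq H y n. src e = A \<and> tgt e = D)"
        by blast
      then show ?thesis
        unfolding edge_into_iff by blast
    qed
    have reverse: "(\<exists>e \<in> Eseq H y n. src e = translate h D \<and> tgt e = D) \<longleftrightarrow>
        Om H y (Suc n) (translate h D) \<noteq> {} \<and> Om H y n D = {}"
    proof -
      have "\<exists>g. translate h D = translate (inv_letter g) D"
        by (metis inv_inv_letter)
      then show ?thesis
        unfolding edge_into_iff by simp
    qed
    show ?thesis
      unfolding mem_Eseq_Suc_iff into reverse Om_Suc_Suc using D by auto
  next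
    case False
    then show ?thesis
      using mem_cosets_if_mem_Eseq by blast
  qed
qed

lemma E_at_eq_image_Om:
  assumes "C \<in> cosets H"
  shows "E_at H y (Suc n) C = (\<lambda>h. (translate (inv_letter h) C, h)) ` Om H y (Suc (Suc n)) C"
proof -
  have "{g. (translate (inv_letter g) C, g) \<in> Eseq H y n} = Om H y (Suc (Suc n)) C"
    unfolding Om_Suc_Suc
    by (auto simp: mem_Eseq_iff translate_mem_cosets[OF assms] translate_translate_inv_letter[OF assms])
  then show ?thesis
    using Eseq_into_eq[OF assms, of y n] by (simp add: E_at_def E_def)
qed

theorem lemma4p1:
  fixes H :: "letter list set" and x y :: "letter list" and i :: nat
  assumes "subgroup H F2"
    and "y \<in> carrier F2"
    and "x \<in> carrier F2"
    and "i \<ge> 1"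
  shows "card (E_at H y i (x <#\<^bsub>F2\<^esub> H)) = card (Omega H y (int i) (x <#\<^bsub>F2\<^esub> H))"
proof -
  define C where "C = x <#\<^bsub>F2\<^esub> H"
  obtain n where i: "i = Suc n"
    using assms(4) by (cases i) auto
  have C: "C \<in> cosets H"
    using assms(3) unfolding C_def cosets_def by blast
  have "inj (\<lambda>h. (translate (inv_letter h) C, h))"
    by (simp add: inj_on_def)
  then have "card (E_at H y i C) = card (Om H y (Suc (Suc n)) C)"
    unfolding i E_at_eq_image_Om[OF C] by (simp add: card_image inj_on_subset)
  also have "\<dots> = card (Omega H y (int i) C)"
    by (simp add: Omega_def i nat_add_distrib)
  finally show ?thesis
    unfolding C_def .
qed

end
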